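(* Let $s$ be an indeterminate, and for an integer $k$ put $\{k\}_s=s^k-s^{-k}$ and $[k]_s=\{k\}_s/\{1\}_s$. For positive integers $m,n$ let $V_H(m,n)=[mn]_s$ (the colored Jones polynomial of the Hopf link $H$, normalized so that the $k$-colored unknot has value $[k]_s$). Let $E_m,E_n,Q_m,Q_n$ act on functions $f(m,n)$ by $(E_mf)(m,n)=f(m+1,n)$, $(E_nf)(m,n)=f(m,n+1)$, $(Q_mf)(m,n)=s^mf(m,n)$, $(Q_nf)(m,n)=s^nf(m,n)$, and put $a(x)=x-x^{-1}$. Define \[A_{s;m}(H)=E_m^2-(Q_n+Q_n^{-1})E_m+1,\qquad A_{s;n}(H)=E_n^2-(Q_m+Q_m^{-1})E_n+1,\] \[A^{\mathrm{bi}}_{s;mn}(H)=a(Q_m)E_m-a(Q_n)E_n+a(Q_nQ_m^{-1}).\] Then $A_{s;m}(H)V_H=0$ and $A^{\mathrm{bi}}_{s;mn}(H)V_H=0$, and in the algebra described in the context the identity \[a(Q_m)a(sQ_m)A_{s;m}(H)-a(Q_n)a(sQ_n)A_{s;n}(H)=\{a(Q_m)E_m+a(Q_n)E_n-a(sQ_mQ_n)\}\,A^{\mathrm{bi}}_{s;mn}(H)\] holds.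
   Context: The identity is in the noncommutative algebra of polynomials in $E_m,E_n$ with coefficients in $\mathbb{Q}(s,Q_m,Q_n)$ written on the left, subject to $E_mE_n=E_nE_m$, $E_m\,p(s,Q_m,Q_n)=p(s,sQ_m,Q_n)\,E_m$ and $E_n\,p(s,Q_m,Q_n)=p(s,Q_m,sQ_n)\,E_n$ for rational functions $p$ (this is the composition rule of the operators above). *)

theory Defs
  imports "HOL-Computational_Algebra.Polynomial" "HOL-Computational_Algebra.Fraction_Field"
begin

type_synonym K = "rat poly fract"

definition sK :: K where "sK = Fract [:0, 1:] 1"

definition curly :: "int \<Rightarrow> K" where
  "curly k = sK powi k - sK powi (-k)"

definition qint :: "int \<Rightarrow> K" where
  "qint k = curly k / curly 1"

definition VH :: "nat \<Rightarrow> nat \<Rightarrow> K" where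
  "VH m n = qint (int m * int n)"

definition aa :: "'a::field \<Rightarrow> 'a" where
  "aa x = x - inverse x"

text \<open>The skew algebra: an element is given by its coefficients c_{ij}(s,Q_m,Q_n) of
  E_m^i E_n^j (coefficients written on the left).  Two elements are equal when all
  coefficients agree as functions of nonzero s, Q_m, Q_n (Laurent polynomial identity).\<close>
type_synonym 'a coef = "'a \<Rightarrow> 'a \<Rightarrow> 'a \<Rightarrow> 'a"
type_synonym 'a skew = "nat \<Rightarrow> nat \<Rightarrow> 'a coef"

definition sk_const :: "'a::field coef \<Rightarrow> 'a skew" where
  "sk_const c = (\<lambda>i j. if i = 0 \<and> j = 0 then c else (\<lambda>_ _ _. 0))"

definition sk_Em :: "'a::field skew" where
  "sk_Em = (\<lambda>i j. if i = 1 \<and> j = 0 then (\<lambda>_ _ _. 1) else (\<lambda>_ _ _. 0))"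

definition sk_En :: "'a::field skew" where
  "sk_En = (\<lambda>i j. if i = 0 \<and> j = 1 then (\<lambda>_ _ _. 1) else (\<lambda>_ _ _. 0))"

definition sk_add :: "'a::field skew \<Rightarrow> 'a skew \<Rightarrow> 'a skew" where
  "sk_add P R = (\<lambda>i j s qm qn. P i j s qm qn + R i j s qm qn)"

definition sk_diff :: "'a::field skew \<Rightarrow> 'a skew \<Rightarrow> 'a skew" where
  "sk_diff P R = (\<lambda>i j s qm qn. P i j s qm qn - R i j s qm qn)"

text \<open>Product using E_m^a E_n^b p(s,Q_m,Q_n) = p(s, s^a Q_m, s^b Q_n) E_m^a E_n^b.\<close>
definition sk_mult :: "'a::field skew \<Rightarrow> 'a skew \<Rightarrow> 'a skew" where
  "sk_mult P R = (\<lambda>i j s qm qn.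
     \<Sum>i1\<le>i. \<Sum>j1\<le>j. P i1 j1 s qm qn * R (i - i1) (j - j1) s (s ^ i1 * qm) (s ^ j1 * qn))"

definition sk_eq :: "'a::field skew \<Rightarrow> 'a skew \<Rightarrow> bool" where
  "sk_eq P R \<longleftrightarrow> (\<forall>i j s qm qn. s \<noteq> 0 \<longrightarrow> qm \<noteq> 0 \<longrightarrow> qn \<noteq> 0 \<longrightarrow>
      P i j s qm qn = R i j s qm qn)"

definition sk_apply :: "K skew \<Rightarrow> (nat \<Rightarrow> nat \<Rightarrow> K) \<Rightarrow> nat \<Rightarrow> nat \<Rightarrow> K" where
  "sk_apply P f m n = (\<Sum>(i, j) \<in> {(i, j). P i j \<noteq> (\<lambda>_ _ _. 0)}.
      P i j sK (sK ^ m) (sK ^ n) * f (m + i) (n + j))"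

definition A_m :: "'a::field skew" where
  "A_m = sk_add (sk_diff (sk_mult sk_Em sk_Em)
                  (sk_mult (sk_const (\<lambda>s qm qn. qn + inverse qn)) sk_Em))
                (sk_const (\<lambda>_ _ _. 1))"

definition A_n :: "'a::field skew" where
  "A_n = sk_add (sk_diff (sk_mult sk_En sk_En)
                  (sk_mult (sk_const (\<lambda>s qm qn. qm + inverse qm)) sk_En))
                (sk_const (\<lambda>_ _ _. 1))"

definition A_bi :: "'a::field skew" where
  "A_bi = sk_add (sk_diff (sk_mult (sk_const (\<lambda>s qm qn. aa qm)) sk_Em)
                          (sk_mult (sk_const (\<lambda>s qm qn. aa qn)) sk_En))
                 (sk_const (\<lambda>s qm qn. aa (qn * inverse qm)))"

end

theory Submission
  imports Defs
begin

text \<open>Writing \<open>a(x) = x - x\<^sup>-\<^sup>1\<close>, we have \<open>V\<^sub>H(m,n) = a(s\<^sup>m\<^sup>n) / {1}\<^sub>s\<close>, so both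
  annihilation statements are Laurent identities in \<open>s\<^sup>m, s\<^sup>n, s\<^sup>m\<^sup>n\<close>: a second-order
  recurrence for \<open>k \<mapsto> a(y\<^sup>k w)\<close> and a three-term relation between products of values of \<open>a\<close>.
  In each product of the operator identity the left factor has total degree at most one in
  \<open>E\<^sub>m, E\<^sub>n\<close>, so the identity reduces to comparing finitely many coefficients, each an identity of
  rational functions in \<open>s, Q\<^sub>m, Q\<^sub>n\<close> valid in every field.\<close>

lemma sum_atMost_truncate:
  fixes f :: "nat \<Rightarrow> 'a::comm_monoid_add"
  assumes "\<And>k. a < k \<Longrightarrow> f k = 0"
  shows "(\<Sum>k\<le>n. f k) = (\<Sum>k\<le>a. if k \<le> n then f k else 0)"
proof -
  have "(\<Sum>k\<le>n. f k) = (\<Sum>k\<in>{k \<in> {..a}. k \<le> n}. f k)"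
    using assms by (intro sum.mono_neutral_right) (auto intro: ccontr)
  also have "\<dots> = (\<Sum>k\<le>a. if k \<le> n then f k else 0)"
    by (rule sum.inter_filter) simp
  finally show ?thesis .
qed

lemma sk_mult_bounded_support:
  assumes "\<And>i j s qm qn. a < i \<or> b < j \<Longrightarrow> P i j s qm qn = 0"
  shows "sk_mult P R i j s qm qn = (\<Sum>i1\<le>a. \<Sum>j1\<le>b. if i1 \<le> i \<and> j1 \<le> j then
           P i1 j1 s qm qn * R (i - i1) (j - j1) s (s ^ i1 * qm) (s ^ j1 * qn) else 0)"
proof -
  let ?g = "\<lambda>i1 j1. P i1 j1 s qm qn * R (i - i1) (j - j1) s (s ^ i1 * qm) (s ^ j1 * qn)"
  have inner: "(\<Sum>j1\<le>j. ?g i1 j1) = (\<Sum>j1\<le>b. if j1 \<le> j then ?g i1 j1 else 0)" for i1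
    by (rule sum_atMost_truncate) (simp add: assms)
  have "sk_mult P R i j s qm qn = (\<Sum>i1\<le>i. \<Sum>j1\<le>b. if j1 \<le> j then ?g i1 j1 else 0)"
    by (simp add: sk_mult_def inner)
  also have "\<dots> = (\<Sum>i1\<le>a. if i1 \<le> i then \<Sum>j1\<le>b. if j1 \<le> j then ?g i1 j1 else 0 else 0)"
    by (rule sum_atMost_truncate) (simp add: assms sum.neutral)
  also have "\<dots> = (\<Sum>i1\<le>a. \<Sum>j1\<le>b. if i1 \<le> i \<and> j1 \<le> j then ?g i1 j1 else 0)"
    by (intro sum.cong) auto
  finally show ?thesis .
qed

lemma sk_mult_affine_left:
  assumes "\<And>i j. 1 < i + j \<Longrightarrow> P i j = (\<lambda>_ _ _. 0)"
  shows "sk_mult P R i j s qm qn =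
           P 0 0 s qm qn * R i j s qm qn
         + (if 0 < i then P 1 0 s qm qn * R (i - 1) j s (s * qm) qn else 0)
         + (if 0 < j then P 0 1 s qm qn * R i (j - 1) s qm (s * qn) else 0)"
proof -
  have "P i j s qm qn = 0" if "1 < i \<or> 1 < j \<or> (i = 1 \<and> j = 1)" for i j s qm qn
    using assms[of i j] that by (auto dest: fun_cong)
  then show ?thesis
    by (subst sk_mult_bounded_support[where a = 1 and b = 1])
       (auto simp: atMost_Suc)
qed

lemma sk_mult_const_left: "sk_mult (sk_const c) R i j s qm qn = c s qm qn * R i j s qm qn"
  by (subst sk_mult_affine_left) (auto simp: sk_const_def)

lemma sk_mult_Em_left:
  "sk_mult sk_Em R i j s qm qn = (if 0 < i then R (i - 1) j s (s * qm) qn else 0)"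
  by (subst sk_mult_affine_left) (auto simp: sk_Em_def)

lemma sk_mult_En_left:
  "sk_mult sk_En R i j s qm qn = (if 0 < j then R i (j - 1) s qm (s * qn) else 0)"
  by (subst sk_mult_affine_left) (auto simp: sk_En_def)

lemmas sk_mult_generator_left = sk_mult_const_left sk_mult_Em_left sk_mult_En_left

lemma A_m_coeff: "(A_m :: 'a::field skew) i j s qm qn =
   (if i = 0 \<and> j = 0 then 1 else if i = 1 \<and> j = 0 then - (qn + inverse qn)
    else if i = 2 \<and> j = 0 then 1 else 0)"
  unfolding A_m_def sk_add_def sk_diff_def sk_mult_generator_left
  by (auto simp: sk_Em_def sk_const_def)

lemma A_n_coeff: "(A_n :: 'a::field skew) i j s qm qn =
   (if i = 0 \<and> j = 0 then 1 else if i = 0 \<and> j = 1 then - (qm + inverse qm)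
    else if i = 0 \<and> j = 2 then 1 else 0)"
  unfolding A_n_def sk_add_def sk_diff_def sk_mult_generator_left
  by (auto simp: sk_En_def sk_const_def)

lemma A_bi_coeff: "(A_bi :: 'a::field skew) i j s qm qn =
   (if i = 0 \<and> j = 0 then aa (qn * inverse qm) else if i = 1 \<and> j = 0 then aa qm
    else if i = 0 \<and> j = 1 then - aa qn else 0)"
  unfolding A_bi_def sk_add_def sk_diff_def sk_mult_generator_left
  by (auto simp: sk_Em_def sk_En_def sk_const_def)

definition A_bi_multiplier :: "'a::field skew" where
  "A_bi_multiplier =
     sk_diff (sk_add (sk_mult (sk_const (\<lambda>s qm qn. aa qm)) sk_Em)
                     (sk_mult (sk_const (\<lambda>s qm qn. aa qn)) sk_En))
             (sk_const (\<lambda>s qm qn. aa (s * qm * qn)))"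

lemma A_bi_multiplier_coeff: "(A_bi_multiplier :: 'a::field skew) i j s qm qn =
   (if i = 0 \<and> j = 0 then - aa (s * qm * qn) else if i = 1 \<and> j = 0 then aa qm
    else if i = 0 \<and> j = 1 then aa qn else 0)"
  unfolding A_bi_multiplier_def sk_add_def sk_diff_def sk_mult_generator_left
  by (auto simp: sk_Em_def sk_En_def sk_const_def)

lemma A_bi_multiplier_mult:
  "sk_mult A_bi_multiplier R i j s qm qn =
     - aa (s * qm * qn) * R i j s qm qn
   + (if 0 < i then aa qm * R (i - 1) j s (s * qm) qn else 0)
   + (if 0 < j then aa qn * R i (j - 1) s qm (s * qn) else 0)"
  by (subst sk_mult_affine_left) (auto simp: A_bi_multiplier_coeff fun_eq_iff)

lemma A_m_A_n_combination_coeff: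
  fixes s qm qn :: "'a::field"
  assumes "s \<noteq> 0" "qm \<noteq> 0" "qn \<noteq> 0"
  shows "aa qm * aa (s * qm) * A_m i j s qm qn - aa qn * aa (s * qn) * A_n i j s qm qn =
         sk_mult A_bi_multiplier A_bi i j s qm qn"
proof -
  have "i = 0 \<or> i = 1 \<or> i = 2 \<or> 2 < i" "j = 0 \<or> j = 1 \<or> j = 2 \<or> 2 < j"
    by linarith+
  then show ?thesis
    unfolding A_bi_multiplier_mult A_m_coeff A_n_coeff
    by (elim disjE) (simp_all add: A_bi_coeff aa_def field_simps assms)
qed

lemma A_m_A_n_combination_eq:
  "sk_eq (sk_diff (sk_mult (sk_const (\<lambda>s qm qn. aa qm * aa (s * qm))) (A_m :: 'a::field skew))
                  (sk_mult (sk_const (\<lambda>s qm qn. aa qn * aa (s * qn))) A_n))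
         (sk_mult A_bi_multiplier A_bi)"
  unfolding sk_eq_def sk_diff_def sk_mult_const_left by (simp add: A_m_A_n_combination_coeff)

lemma aa_three_term_recurrence:
  fixes y w :: "'a::field"
  assumes "y \<noteq> 0" "w \<noteq> 0"
  shows "aa (y * (y * w)) - (y + inverse y) * aa (y * w) + aa w = 0"
  using assms by (simp add: aa_def field_simps)

lemma aa_cross_relation:
  fixes x y z :: "'a::field"
  assumes "x \<noteq> 0" "y \<noteq> 0" "z \<noteq> 0"
  shows "aa (y * inverse x) * aa z + aa x * aa (y * z) - aa y * aa (x * z) = 0"
  using assms by (simp add: aa_def field_simps)

lemma sK_nonzero: "sK \<noteq> 0"
  by (simp add: sK_def Zero_fract_def eq_fract)

lemma curly_of_nat: "curly (int k) = aa (sK ^ k)"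
  by (simp add: curly_def aa_def power_int_minus)

lemma VH_eq: "VH m n = aa (sK ^ (m * n)) / curly 1"
  by (simp add: VH_def qint_def flip: curly_of_nat of_nat_mult)

lemma sk_apply_finite_support:
  assumes "finite T" "\<And>i j. (i, j) \<notin> T \<Longrightarrow> P i j = (\<lambda>_ _ _. 0)"
  shows "sk_apply P f m n = (\<Sum>(i, j)\<in>T. P i j sK (sK ^ m) (sK ^ n) * f (m + i) (n + j))"
  unfolding sk_apply_def by (rule sum.mono_neutral_left) (use assms in auto)

lemma A_m_annihilates_VH: "sk_apply A_m VH m n = 0"
proof -
  let ?y = "sK ^ n" and ?w = "sK ^ (m * n)"
  have "sk_apply A_m VH m n =
      (\<Sum>(i, j)\<in>{(0, 0), (1, 0), (2, 0)}. A_m i j sK (sK ^ m) ?y * VH (m + i) (n + j))"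
    by (rule sk_apply_finite_support) (auto simp: A_m_coeff fun_eq_iff)
  also have "\<dots> = (aa (?y * (?y * ?w)) - (?y + inverse ?y) * aa (?y * ?w) + aa ?w) / curly 1"
    by (simp add: A_m_coeff VH_eq algebra_simps add_divide_distrib diff_divide_distrib
        mult_2_right flip: power_add)
  also have "\<dots> = 0"
    by (simp add: aa_three_term_recurrence sK_nonzero)
  finally show ?thesis .
qed

lemma A_bi_annihilates_VH: "sk_apply A_bi VH m n = 0"
proof -
  let ?x = "sK ^ m" and ?y = "sK ^ n" and ?z = "sK ^ (m * n)"
  have "sk_apply A_bi VH m n =
      (\<Sum>(i, j)\<in>{(0, 0), (1, 0), (0, 1)}. A_bi i j sK ?x ?y * VH (m + i) (n + j))"
    by (rule sk_apply_finite_support) (auto simp: A_bi_coeff fun_eq_iff)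
  also have "\<dots> = (aa (?y * inverse ?x) * aa ?z + aa ?x * aa (?y * ?z) - aa ?y * aa (?x * ?z))
                    / curly 1"
    by (simp add: A_bi_coeff VH_eq algebra_simps add_divide_distrib diff_divide_distrib
        flip: power_add)
  also have "\<dots> = 0"
    by (simp add: aa_cross_relation sK_nonzero)
  finally show ?thesis .
qed

theorem mainTheorem1:
  shows "(\<forall>m n. 0 < m \<longrightarrow> 0 < n \<longrightarrow> sk_apply A_m VH m n = 0)
       \<and> (\<forall>m n. 0 < m \<longrightarrow> 0 < n \<longrightarrow> sk_apply A_bi VH m n = 0)
       \<and> sk_eq
           (sk_diff (sk_mult (sk_const (\<lambda>s qm qn. aa qm * aa (s * qm))) (A_m :: K skew))
                    (sk_mult (sk_const (\<lambda>s qm qn. aa qn * aa (s * qn))) A_n))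
           (sk_mult (sk_diff (sk_add (sk_mult (sk_const (\<lambda>s qm qn. aa qm)) sk_Em)
                                     (sk_mult (sk_const (\<lambda>s qm qn. aa qn)) sk_En))
                             (sk_const (\<lambda>s qm qn. aa (s * qm * qn))))
                    A_bi)"
  using A_m_annihilates_VH A_bi_annihilates_VH A_m_A_n_combination_eq
  unfolding A_bi_multiplier_def by blast

end
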